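(* Let $u,w$ be words over $\{L,R\}$. If $w$ starts with $L$ and $u$ is a tail of $w$, then $Lu$ is reduced from $Lw$. Dually, if $w$ starts with $R$ and $u$ is a tail of $w$, then $Ru$ is reduced from $Rw$.
   Context: Words are finite strings (including the empty word) over $\{L,R\}$. A tail of $w$ is any word $v'$ with $w=vv'$ for some word $v$. A word $u$ is reduced from $w$ if it is obtained from $w$ by finitely many (possibly zero) successive applications of the reduction rules, where $v,v'$ are arbitrary words: (1) $vRRv'\Rightarrow vRv'$; (1') $vLLv'\Rightarrow vLv'$; (2) $vLRv'\Rightarrow vv'$; (2') $vRLv'\Rightarrow vv'$. *)

theory Defs
  imports Main
begin

datatype letter = L | R

type_synonym word = "letter list"

inductive red_step :: "word \<Rightarrow> word \<Rightarrow> bool" where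
  rRR: "red_step (v @ [R, R] @ v') (v @ [R] @ v')"
| rLL: "red_step (v @ [L, L] @ v') (v @ [L] @ v')"
| rLR: "red_step (v @ [L, R] @ v') (v @ v')"
| rRL: "red_step (v @ [R, L] @ v') (v @ v')"

definition reduced_from :: "word \<Rightarrow> word \<Rightarrow> bool" where
  "reduced_from u w \<longleftrightarrow> red_step\<^sup>*\<^sup>* w u"

definition is_tail :: "word \<Rightarrow> word \<Rightarrow> bool" where
  "is_tail u w \<longleftrightarrow> (\<exists>v. w = v @ u)"

end

theory Submission
  imports Defs
begin

text \<open>Reduction is closed under adding context on both sides, and every word reduces to a
  word of length at most one. Hence, with w = a v u, the word a a v reduces to a a s with
  length s \<le> 1, and each of a a, a a a, a a b (b \<noteq> a) reduces to a; so a w reduces to a u.\<close>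

lemma red_step_in_context: "red_step x y \<Longrightarrow> red_step (p @ x @ q) (p @ y @ q)"
proof (induction rule: red_step.induct)
  case (rRR v v') then show ?case using red_step.rRR[of "p @ v" "v' @ q"] by simp
next
  case (rLL v v') then show ?case using red_step.rLL[of "p @ v" "v' @ q"] by simp
next
  case (rLR v v') then show ?case using red_step.rLR[of "p @ v" "v' @ q"] by simp
next
  case (rRL v v') then show ?case using red_step.rRL[of "p @ v" "v' @ q"] by simp
qed

lemma reduces_in_context: "red_step\<^sup>*\<^sup>* x y \<Longrightarrow> red_step\<^sup>*\<^sup>* (p @ x @ q) (p @ y @ q)"
  by (induction rule: rtranclp_induct)
    (auto intro: rtranclp.rtrancl_into_rtrancl red_step_in_context)

lemma red_step_same_pair: "red_step [a, a] [a]"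
  using red_step.rRR[of "[]" "[]"] red_step.rLL[of "[]" "[]"] by (cases a) auto

lemma red_step_distinct_pair: "a \<noteq> b \<Longrightarrow> red_step [a, b] []"
  using red_step.rLR[of "[]" "[]"] red_step.rRL[of "[]" "[]"] by (cases a; cases b) auto

lemma reduces_pair_short: "\<exists>s. length s \<le> 1 \<and> red_step\<^sup>*\<^sup>* [a, b] s"
proof (cases "a = b")
  case True
  then show ?thesis using red_step_same_pair[of a] by (intro exI[of _ "[a]"]) auto
next
  case False
  then show ?thesis using red_step_distinct_pair[OF False] by (intro exI[of _ "[]"]) auto
qed

lemma reduces_short: "\<exists>s. length s \<le> 1 \<and> red_step\<^sup>*\<^sup>* v s"
proof (induction v)
  case Nil
  show ?case by (intro exI[of _ "[]"]) auto
next
  case (Cons b v)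
  then obtain s where s: "length s \<le> 1" "red_step\<^sup>*\<^sup>* v s" by blast
  have v_to_s: "red_step\<^sup>*\<^sup>* (b # v) (b # s)"
    using reduces_in_context[OF s(2), where p = "[b]" and q = "[]"] by simp
  show ?case
  proof (cases s)
    case Nil
    then show ?thesis using v_to_s by (intro exI[of _ "[b]"]) auto
  next
    case (Cons c s')
    then have "s = [c]" using s(1) by simp
    then show ?thesis using v_to_s reduces_pair_short[of b c]
      by (meson rtranclp_trans)
  qed
qed

lemma reduces_double_prefix_short:
  assumes "length s \<le> 1"
  shows "red_step\<^sup>*\<^sup>* (a # a # s) [a]"
proof (cases s)
  case Nil
  then show ?thesis using red_step_same_pair[of a] by simp
next
  case (Cons b s')
  then have s: "s = [b]" using assms by simp
  show ?thesis
  proof (cases "b = a")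
    case True
    have "red_step [a, a, a] [a, a]"
      using red_step_in_context[OF red_step_same_pair[of a], where p = "[a]" and q = "[]"]
      by simp
    then show ?thesis using red_step_same_pair[of a] s True
      by (meson converse_rtranclp_into_rtranclp r_into_rtranclp)
  next
    case False
    then have "red_step [a, a, b] [a]"
      using red_step_in_context[OF red_step_distinct_pair[of a b], where p = "[a]" and q = "[]"]
      by simp
    then show ?thesis using s by simp
  qed
qed

lemma reduces_double_prefix: "red_step\<^sup>*\<^sup>* (a # a # v) [a]"
proof -
  obtain s where s: "length s \<le> 1" "red_step\<^sup>*\<^sup>* v s" using reduces_short by blast
  have "red_step\<^sup>*\<^sup>* (a # a # v) (a # a # s)"
    using reduces_in_context[OF s(2), where p = "[a, a]" and q = "[]"] by simp
  also have "red_step\<^sup>*\<^sup>* \<dots> [a]" using s(1) by (rule reduces_double_prefix_short)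
  finally show ?thesis .
qed

lemma reduced_from_tail:
  assumes "hd w = a" "is_tail u w"
  shows "reduced_from (a # u) (a # w)"
proof -
  obtain v where w: "w = v @ u" using assms(2) unfolding is_tail_def by blast
  show ?thesis
  proof (cases v)
    case Nil
    then show ?thesis using w unfolding reduced_from_def by simp
  next
    case (Cons b v')
    then have "a # w = [] @ (a # a # v') @ u" using w assms(1) by simp
    then show ?thesis
      using reduces_in_context[OF reduces_double_prefix[of a v'], where p = "[]" and q = u]
      unfolding reduced_from_def by simp
  qed
qed

theorem mainTheorem6:
  fixes u w :: word
  shows "(hd w = L \<and> w \<noteq> [] \<and> is_tail u w \<longrightarrow> reduced_from (L # u) (L # w))
       \<and> (hd w = R \<and> w \<noteq> [] \<and> is_tail u w \<longrightarrow> reduced_from (R # u) (R # w))"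
  using reduced_from_tail by blast

end
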